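(* Let $G$ be a group acting geometrically on a systolic complex $X$ and let $h\in G$ be a hyperbolic isometry. Let $K\ge L(h)$ be an integer. Then there exists $C>0$ such that for all integers $K'$ with $L(h)\le K'\le K$ we have $\mathrm{Disp}_K(h)\subset B_C(\mathrm{Disp}_{K'}(h),X)$.
   Context: $X$ is a systolic complex (simply connected simplicial complex with flag, $6$-large vertex links, where $6$-large means every embedded cycle of length $4$ or $5$ has a diagonal), with the combinatorial metric $d$ on vertices. The action is geometric: by simplicial automorphisms, with finite vertex stabilisers, and cocompact. An isometry (simplicial automorphism) $h$ is hyperbolic if it fixes no simplex of $X$. $L(h)=\min_x d(x,h x)$ over vertices $x$ (the translation length). For an integer $K\ge L(h)$, $\mathrm{Disp}_K(h)$ is the subcomplex spanned by all vertices $x$ with $d(x,hx)\le K$. For a subcomplex $A$, $B_C(A,X)$ is the union over vertices $v\in A$ of the balls $B_C(v,X)$, where $B_C(v,X)$ is the subcomplex spanned by vertices at distance $\le C$ from $v$. *)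

theory Defs
  imports "HOL-Algebra.Group_Action"
begin

definition simplicial_complex :: "'v set set \<Rightarrow> bool" where
  "simplicial_complex S \<longleftrightarrow>
     (\<forall>s\<in>S. finite s \<and> s \<noteq> {}) \<and> (\<forall>s\<in>S. \<forall>t. t \<subseteq> s \<and> t \<noteq> {} \<longrightarrow> t \<in> S)"

definition verts :: "'v set set \<Rightarrow> 'v set" where
  "verts S = {v. {v} \<in> S}"

definition adj :: "'v set set \<Rightarrow> 'v \<Rightarrow> 'v \<Rightarrow> bool" where
  "adj S u v \<longleftrightarrow> u \<noteq> v \<and> {u, v} \<in> S"

definition flag :: "'v set set \<Rightarrow> bool" where
  "flag S \<longleftrightarrow> (\<forall>s. finite s \<and> s \<noteq> {} \<and> s \<subseteq> verts S \<and>
       (\<forall>u\<in>s. \<forall>v\<in>s. u \<noteq> v \<longrightarrow> {u, v} \<in> S) \<longrightarrow> s \<in> S)"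

definition link :: "'v set set \<Rightarrow> 'v \<Rightarrow> 'v set set" where
  "link S v = {s. v \<notin> s \<and> s \<noteq> {} \<and> insert v s \<in> S}"

definition six_large :: "'v set set \<Rightarrow> bool" where
  "six_large S \<longleftrightarrow> (\<forall>n::nat. \<forall>c::nat \<Rightarrow> 'v. (n = 4 \<or> n = 5) \<and>
       inj_on c {..<n} \<and> (\<forall>i<n. adj S (c i) (c (Suc i mod n))) \<longrightarrow>
       (\<exists>i<n. \<exists>j<n. i \<noteq> j \<and> j \<noteq> Suc i mod n \<and> i \<noteq> Suc j mod n \<and> adj S (c i) (c j)))"

definition edge_path :: "'v set set \<Rightarrow> 'v list \<Rightarrow> bool" where
  "edge_path S p \<longleftrightarrow> p \<noteq> [] \<and> set p \<subseteq> verts S \<and>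
     (\<forall>i. Suc i < length p \<longrightarrow> {p ! i, p ! Suc i} \<in> S)"

inductive elem_move :: "'v set set \<Rightarrow> 'v list \<Rightarrow> 'v list \<Rightarrow> bool" for S where
  tri: "{a, b, c} \<in> S \<Longrightarrow> elem_move S (xs @ [a, b, c] @ ys) (xs @ [a, c] @ ys)"
| stutter: "{a} \<in> S \<Longrightarrow> elem_move S (xs @ [a, a] @ ys) (xs @ [a] @ ys)"

definition path_homotopic :: "'v set set \<Rightarrow> 'v list \<Rightarrow> 'v list \<Rightarrow> bool" where
  "path_homotopic S = (\<lambda>p q. (p, q) \<in> ({(x, y). elem_move S x y} \<union> {(x, y). elem_move S y x})\<^sup>*)"

definition connected_complex :: "'v set set \<Rightarrow> bool" where
  "connected_complex S \<longleftrightarrow> verts S \<noteq> {} \<and>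
     (\<forall>u\<in>verts S. \<forall>v\<in>verts S. \<exists>p. edge_path S p \<and> hd p = u \<and> last p = v)"

definition simply_connected_complex :: "'v set set \<Rightarrow> bool" where
  "simply_connected_complex S \<longleftrightarrow> connected_complex S \<and>
     (\<forall>p. edge_path S p \<and> hd p = last p \<longrightarrow> path_homotopic S p [hd p])"

definition systolic :: "'v set set \<Rightarrow> bool" where
  "systolic S \<longleftrightarrow> simplicial_complex S \<and> simply_connected_complex S \<and> flag S \<and>
     (\<forall>v\<in>verts S. flag (link S v) \<and> six_large (link S v))"

definition cdist :: "'v set set \<Rightarrow> 'v \<Rightarrow> 'v \<Rightarrow> nat" where
  "cdist S u v = (LEAST n. \<exists>p. edge_path S p \<and> hd p = u \<and> last p = v \<and> length p = Suc n)"

definition geometric_action :: "('g, 'b) monoid_scheme \<Rightarrow> ('g \<Rightarrow> 'v \<Rightarrow> 'v) \<Rightarrow> 'v set set \<Rightarrow> bool" where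
  "geometric_action G \<phi> S \<longleftrightarrow> group G \<and> group_action G (verts S) \<phi> \<and>
     (\<forall>g\<in>carrier G. \<forall>s. s \<subseteq> verts S \<longrightarrow> (s \<in> S \<longleftrightarrow> \<phi> g ` s \<in> S)) \<and>
     (\<forall>v\<in>verts S. finite {g\<in>carrier G. \<phi> g v = v}) \<and>
     (\<exists>F. finite F \<and> F \<subseteq> S \<and> (\<forall>s\<in>S. \<exists>g\<in>carrier G. \<exists>t\<in>F. s = \<phi> g ` t))"

definition hyperbolic :: "'v set set \<Rightarrow> ('v \<Rightarrow> 'v) \<Rightarrow> bool" where
  "hyperbolic S h \<longleftrightarrow> (\<forall>s\<in>S. h ` s \<noteq> s)"

definition transl_length :: "'v set set \<Rightarrow> ('v \<Rightarrow> 'v) \<Rightarrow> nat" where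
  "transl_length S h = (LEAST n. \<exists>x\<in>verts S. cdist S x (h x) = n)"

definition span :: "'v set set \<Rightarrow> 'v set \<Rightarrow> 'v set set" where
  "span S V = {s\<in>S. s \<subseteq> V}"

definition Disp :: "'v set set \<Rightarrow> nat \<Rightarrow> ('v \<Rightarrow> 'v) \<Rightarrow> 'v set set" where
  "Disp S K h = span S {x\<in>verts S. cdist S x (h x) \<le> K}"

definition cball :: "'v set set \<Rightarrow> nat \<Rightarrow> 'v \<Rightarrow> 'v set set" where
  "cball S C v = span S {y\<in>verts S. cdist S v y \<le> C}"

definition nbhd :: "'v set set \<Rightarrow> nat \<Rightarrow> 'v set set \<Rightarrow> 'v set set" where
  "nbhd S C A = (\<Union>v\<in>\<Union>A. cball S C v)"

end

theory Submission
  imports Defs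
begin

text \<open>A vertex x displaced at most K by h is g a with a in a finite
  set R of orbit representatives, and a is displaced at most K by the conjugate g\<inverse> h g. By
  properness only finitely many such conjugates occur, say those of \<gamma> in a finite set \<Gamma>. Then
  z = g \<gamma>\<inverse> commutes with h, so it maps a fixed vertex y of minimal displacement L(h) to a
  vertex of minimal displacement at distance d(y, \<gamma> a) from x, which is bounded over \<Gamma> \<times> R.
  Since every Disp_K' contains the vertices of minimal displacement, the bound is uniform in K'.\<close>

lemma simplicial_complex_face:
  "simplicial_complex S \<Longrightarrow> s \<in> S \<Longrightarrow> t \<subseteq> s \<Longrightarrow> t \<noteq> {} \<Longrightarrow> t \<in> S"
  unfolding simplicial_complex_def by blast

lemma simplicial_complex_verts: "simplicial_complex S \<Longrightarrow> s \<in> S \<Longrightarrow> s \<subseteq> verts S"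
  unfolding verts_def using simplicial_complex_face by fastforce

lemma edge_path_snoc:
  assumes p: "edge_path S p" and "{last p, y} \<in> S" and "y \<in> verts S"
  shows "edge_path S (p @ [y])"
proof -
  have ne: "p \<noteq> []" using p unfolding edge_path_def by auto
  have "{(p @ [y]) ! i, (p @ [y]) ! Suc i} \<in> S" if i: "Suc i < length (p @ [y])" for i
  proof (cases "Suc i < length p")
    case True then show ?thesis using p unfolding edge_path_def by (simp add: nth_append)
  next
    case False
    then have "i = length p - 1" using i by auto
    then show ?thesis using assms ne by (simp add: nth_append last_conv_nth)
  qed
  then show ?thesis using p assms(3) unfolding edge_path_def by auto
qed

lemma edge_path_butlast:
  assumes p: "edge_path S p" and l: "2 \<le> length p"
  shows "edge_path S (butlast p)" and "hd (butlast p) = hd p"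
    and "{last (butlast p), last p} \<in> S"
proof -
  have ne: "butlast p \<noteq> []" using l by (cases p) auto
  show "edge_path S (butlast p)"
    using p ne unfolding edge_path_def by (auto simp: nth_butlast dest: in_set_butlastD)
  show "hd (butlast p) = hd p" using l by (cases p) auto
  obtain m where m: "length p = Suc (Suc m)" using l by (metis add_2_eq_Suc le_Suc_ex)
  moreover have "p \<noteq> []" using l by auto
  ultimately have "last (butlast p) = p ! m" "last p = p ! Suc m"
    using ne by (auto simp: last_conv_nth nth_butlast)
  moreover have "{p ! m, p ! Suc m} \<in> S" using p m unfolding edge_path_def by simp
  ultimately show "{last (butlast p), last p} \<in> S" by simp
qed

lemma cdist_le_path_length:
  assumes "edge_path S p" "hd p = u" "last p = v"
  shows "cdist S u v \<le> length p - 1"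
proof -
  have "length p = Suc (length p - 1)" using assms(1) unfolding edge_path_def by (cases p) auto
  then show ?thesis unfolding cdist_def using assms by (metis (mono_tags, lifting) Least_le)
qed

lemma geodesic_exists:
  assumes "connected_complex S" "u \<in> verts S" "v \<in> verts S"
  shows "\<exists>p. edge_path S p \<and> hd p = u \<and> last p = v \<and> length p = Suc (cdist S u v)"
proof -
  obtain p where p: "edge_path S p" "hd p = u" "last p = v"
    using assms unfolding connected_complex_def by blast
  then have "length p = Suc (length p - 1)" unfolding edge_path_def by (cases p) auto
  with p have "\<exists>n p. edge_path S p \<and> hd p = u \<and> last p = v \<and> length p = Suc n" by blast
  then show ?thesis unfolding cdist_def by (rule LeastI_ex)
qed

lemma cdist_edge_le:
  assumes "connected_complex S" "u \<in> verts S" "x \<in> verts S" "y \<in> verts S" "{x, y} \<in> S"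
  shows "cdist S u y \<le> Suc (cdist S u x)"
proof -
  obtain p where p: "edge_path S p" "hd p = u" "last p = x" "length p = Suc (cdist S u x)"
    using geodesic_exists[OF assms(1-3)] by blast
  have "edge_path S (p @ [y])" using edge_path_snoc[OF p(1)] p(3) assms(4,5) by simp
  moreover have "hd (p @ [y]) = u" using p unfolding edge_path_def by simp
  ultimately show ?thesis using cdist_le_path_length[of S "p @ [y]"] p(4) by simp
qed

lemma cdist_Suc_neighbour:
  assumes "connected_complex S" "a \<in> verts S" "y \<in> verts S" "cdist S a y = Suc m"
  shows "\<exists>u\<in>verts S. cdist S a u \<le> m \<and> {u, y} \<in> S"
proof -
  obtain p where p: "edge_path S p" "hd p = a" "last p = y" "length p = Suc (Suc m)"
    using geodesic_exists[OF assms(1-3)] assms(4) by auto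
  then have "2 \<le> length p" by simp
  note q = edge_path_butlast[OF p(1) this]
  have "butlast p \<noteq> []" using p(4) by (cases p) auto
  then have "last (butlast p) \<in> verts S" using q(1) unfolding edge_path_def by auto
  moreover have "cdist S a (last (butlast p)) \<le> m"
    using cdist_le_path_length[OF q(1)] q(2) p by simp
  ultimately show ?thesis using q(3) p(3) by blast
qed

lemma finite_cdist_ball:
  assumes conn: "connected_complex S" and a: "a \<in> verts S"
    and locfin: "\<And>u. u \<in> verts S \<Longrightarrow> finite {w. {u, w} \<in> S}"
  shows "finite {y\<in>verts S. cdist S a y \<le> n}"
proof (induction n)
  case 0
  have "{y\<in>verts S. cdist S a y \<le> 0} \<subseteq> {a}"
    using geodesic_exists[OF conn a] by (fastforce simp: length_Suc_conv)
  then show ?case by (rule finite_subset) simp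
next
  case (Suc n)
  let ?B = "{y\<in>verts S. cdist S a y \<le> n}"
  have "{y\<in>verts S. cdist S a y \<le> Suc n} \<subseteq> ?B \<union> (\<Union>u\<in>?B. {w. {u, w} \<in> S})"
    using cdist_Suc_neighbour[OF conn a] by (fastforce simp: le_Suc_eq)
  moreover have "finite (\<Union>u\<in>?B. {w. {u, w} \<in> S})" using Suc locfin by blast
  ultimately show ?case using Suc by (meson finite_UnI finite_subset)
qed

lemma transl_length_attained:
  assumes "verts S \<noteq> {}"
  shows "\<exists>x\<in>verts S. cdist S x (f x) = transl_length S f"
proof -
  have "\<exists>n. \<exists>x\<in>verts S. cdist S x (f x) = n" using assms by blast
  then show ?thesis unfolding transl_length_def by (rule LeastI_ex)
qed

lemma Disp_subset_nbhd:
  assumes "simplicial_complex S" "connected_complex S"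
    and near: "\<And>x. x \<in> verts S \<Longrightarrow> cdist S x (f x) \<le> K \<Longrightarrow>
      \<exists>v\<in>verts S. cdist S v (f v) \<le> K' \<and> cdist S v x \<le> C"
  shows "Disp S K f \<subseteq> nbhd S (Suc C) (Disp S K' f)"
proof
  fix s assume "s \<in> Disp S K f"
  then have s: "s \<in> S" "s \<subseteq> verts S" "\<forall>x\<in>s. cdist S x (f x) \<le> K"
    unfolding Disp_def span_def by auto
  then obtain x where x: "x \<in> s" using assms(1) unfolding simplicial_complex_def by blast
  then have "x \<in> verts S" "cdist S x (f x) \<le> K" using s by auto
  from near[OF this] obtain v where v: "v \<in> verts S" "cdist S v (f v) \<le> K'" "cdist S v x \<le> C"
    by blast
  have "cdist S v y \<le> Suc C" if y: "y \<in> s" for y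
  proof -
    have "{x, y} \<in> S" using simplicial_complex_face[OF assms(1) s(1)] x y by simp
    moreover have "x \<in> verts S" "y \<in> verts S" using s(2) x y by auto
    ultimately show ?thesis using cdist_edge_le[OF assms(2) v(1)] v(3) by fastforce
  qed
  then have "s \<in> cball S (Suc C) v" using s unfolding cball_def span_def by auto
  moreover have "{v} \<in> Disp S K' f" using v unfolding Disp_def span_def verts_def by simp
  ultimately show "s \<in> nbhd S (Suc C) (Disp S K' f)" unfolding nbhd_def by blast
qed

lemma (in group) conj_eq_imp_centralizes:
  assumes "g \<in> carrier G" "\<gamma> \<in> carrier G" "h \<in> carrier G"
    and "inv \<gamma> \<otimes> h \<otimes> \<gamma> = inv g \<otimes> h \<otimes> g"
  shows "inv (g \<otimes> inv \<gamma>) \<otimes> h \<otimes> (g \<otimes> inv \<gamma>) = h"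
proof -
  have "inv (g \<otimes> inv \<gamma>) \<otimes> h \<otimes> (g \<otimes> inv \<gamma>) = \<gamma> \<otimes> (inv g \<otimes> h \<otimes> g) \<otimes> inv \<gamma>"
    using assms(1-3) by (simp add: inv_mult_group m_assoc)
  also have "\<dots> = \<gamma> \<otimes> (inv \<gamma> \<otimes> h \<otimes> \<gamma>) \<otimes> inv \<gamma>" using assms(4) by simp
  also have "\<dots> = h" using assms(2,3) by (simp add: m_assoc[symmetric]) (simp add: m_assoc)
  finally show ?thesis .
qed

locale geometric_complex_action =
  fixes G :: "('g, 'b) monoid_scheme" (structure) and \<phi> :: "'g \<Rightarrow> 'v \<Rightarrow> 'v" and S :: "'v set set"
  assumes simplicial: "simplicial_complex S"
    and connected: "connected_complex S"
    and geometric: "geometric_action G \<phi> S"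

sublocale geometric_complex_action \<subseteq> group_action G "verts S" \<phi>
  using geometric unfolding geometric_action_def by blast

sublocale geometric_complex_action \<subseteq> group G
  using geometric unfolding geometric_action_def by blast

context geometric_complex_action
begin

lemma act_closed: "g \<in> carrier G \<Longrightarrow> x \<in> verts S \<Longrightarrow> \<phi> g x \<in> verts S"
  using element_image by blast

lemma act_inv_cancel: "g \<in> carrier G \<Longrightarrow> x \<in> verts S \<Longrightarrow> \<phi> (inv g) (\<phi> g x) = x"
  by (rule orbit_sym_aux[OF _ _ refl])

lemma simplex_act:
  assumes "g \<in> carrier G" "s \<in> S"
  shows "\<phi> g ` s \<in> S"
proof -
  have "\<forall>g\<in>carrier G. \<forall>s. s \<subseteq> verts S \<longrightarrow> (s \<in> S \<longleftrightarrow> \<phi> g ` s \<in> S)"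
    using geometric unfolding geometric_action_def by (elim conjE)
  then show ?thesis using assms simplicial_complex_verts[OF simplicial assms(2)] by blast
qed

lemma edge_path_act:
  assumes g: "g \<in> carrier G" and p: "edge_path S p"
  shows "edge_path S (map (\<phi> g) p)"
proof -
  have "{\<phi> g (p ! i), \<phi> g (p ! Suc i)} \<in> S" if "Suc i < length p" for i
    using simplex_act[OF g, of "{p ! i, p ! Suc i}"] p that unfolding edge_path_def by simp
  then show ?thesis using p act_closed[OF g] unfolding edge_path_def by auto
qed

lemma cdist_act_le:
  assumes g: "g \<in> carrier G" and "u \<in> verts S" "v \<in> verts S"
  shows "cdist S (\<phi> g u) (\<phi> g v) \<le> cdist S u v"
proof -
  obtain p where p: "edge_path S p" "hd p = u" "last p = v" "length p = Suc (cdist S u v)"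
    using geodesic_exists[OF connected assms(2,3)] by blast
  then have "p \<noteq> []" by auto
  with p show ?thesis
    using cdist_le_path_length[OF edge_path_act[OF g p(1)]] by (simp add: hd_map last_map)
qed

lemma cdist_act:
  assumes g: "g \<in> carrier G" and "u \<in> verts S" "v \<in> verts S"
  shows "cdist S (\<phi> g u) (\<phi> g v) = cdist S u v"
  using cdist_act_le[OF inv_closed[OF g], of "\<phi> g u" "\<phi> g v"] cdist_act_le[OF assms]
    act_inv_cancel act_closed assms by simp

lemma displacement_conj:
  assumes "g \<in> carrier G" "h \<in> carrier G" "a \<in> verts S"
  shows "cdist S a (\<phi> (inv g \<otimes> h \<otimes> g) a) = cdist S (\<phi> g a) (\<phi> h (\<phi> g a))"
proof -
  have "\<phi> (inv g \<otimes> h \<otimes> g) a = \<phi> (inv g) (\<phi> h (\<phi> g a))"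
    using assms by (simp add: composition_rule act_closed)
  then show ?thesis
    using cdist_act[of "inv g" "\<phi> g a" "\<phi> h (\<phi> g a)"] assms act_closed act_inv_cancel by simp
qed

lemma finite_fibre:
  assumes a: "a \<in> verts S"
  shows "finite {k\<in>carrier G. \<phi> k a = w}"
proof (cases "\<exists>k1\<in>carrier G. \<phi> k1 a = w")
  case True
  then obtain k1 where k1: "k1 \<in> carrier G" "\<phi> k1 a = w" ..
  then have k1_inv: "\<phi> (inv k1) w = a" using act_inv_cancel a by blast
  have "{k\<in>carrier G. \<phi> k a = w} \<subseteq> (\<otimes>) k1 ` stabilizer G \<phi> a"
  proof
    fix k assume k: "k \<in> {k\<in>carrier G. \<phi> k a = w}"
    then have "inv k1 \<otimes> k \<in> stabilizer G \<phi> a"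
      using k1 a k1_inv by (simp add: stabilizer_def composition_rule)
    moreover have "k = k1 \<otimes> (inv k1 \<otimes> k)" using k k1 by (simp add: m_assoc[symmetric])
    ultimately show "k \<in> (\<otimes>) k1 ` stabilizer G \<phi> a" by blast
  qed
  moreover have "finite (stabilizer G \<phi> a)"
    using geometric a unfolding geometric_action_def stabilizer_def by (elim conjE) blast
  ultimately show ?thesis by (meson finite_imageI finite_subset)
next
  case False
  then have "{k\<in>carrier G. \<phi> k a = w} = {}" by blast
  then show ?thesis by (simp only: finite.emptyI)
qed

lemma cocompact: "\<exists>F. finite F \<and> F \<subseteq> S \<and> (\<forall>s\<in>S. \<exists>g\<in>carrier G. \<exists>t\<in>F. s = \<phi> g ` t)"
  using geometric unfolding geometric_action_def by (elim conjE)

lemma finite_simplex: "s \<in> S \<Longrightarrow> finite s"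
  using simplicial unfolding simplicial_complex_def by blast

lemma finite_neighbours:
  assumes u: "u \<in> verts S"
  shows "finite {w. {u, w} \<in> S}"
proof -
  obtain F where F: "finite F" "F \<subseteq> S" "\<forall>s\<in>S. \<exists>g\<in>carrier G. \<exists>t\<in>F. s = \<phi> g ` t"
    using cocompact by blast
  have "{w. {u, w} \<in> S} \<subseteq> (\<Union>t\<in>F. \<Union>b\<in>t. \<Union>c\<in>t. (\<lambda>g. \<phi> g c) ` {g\<in>carrier G. \<phi> g b = u})"
  proof
    fix w assume "w \<in> {w. {u, w} \<in> S}"
    then obtain g t where g: "g \<in> carrier G" "t \<in> F" "{u, w} = \<phi> g ` t" using F(3) by blast
    then obtain b c where "b \<in> t" "c \<in> t" "u = \<phi> g b" "w = \<phi> g c"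
      by (metis imageE insertI1 insertI2 singletonI)
    with g show "w \<in> (\<Union>t\<in>F. \<Union>b\<in>t. \<Union>c\<in>t. (\<lambda>g. \<phi> g c) ` {g\<in>carrier G. \<phi> g b = u})"
      by blast
  qed
  moreover have "finite (\<Union>t\<in>F. \<Union>b\<in>t. \<Union>c\<in>t. (\<lambda>g. \<phi> g c) ` {g\<in>carrier G. \<phi> g b = u})"
    using F finite_simplex simplicial_complex_verts[OF simplicial]
    by (intro finite_UN_I finite_imageI finite_fibre) (simp | blast)+
  ultimately show ?thesis by (rule finite_subset)
qed

lemma finite_bounded_displacement:
  assumes a: "a \<in> verts S"
  shows "finite {k\<in>carrier G. cdist S a (\<phi> k a) \<le> n}"
proof -
  let ?B = "{y\<in>verts S. cdist S a y \<le> n}"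
  have "{k\<in>carrier G. cdist S a (\<phi> k a) \<le> n} \<subseteq> (\<Union>w\<in>?B. {k\<in>carrier G. \<phi> k a = w})"
    using a act_closed by blast
  moreover have "finite ?B" by (rule finite_cdist_ball[OF connected a finite_neighbours])
  ultimately show ?thesis using finite_fibre[OF a] by (blast intro: finite_subset)
qed

lemma finite_orbit_representatives:
  obtains R where "finite R" "R \<subseteq> verts S" "\<And>x. x \<in> verts S \<Longrightarrow> \<exists>g\<in>carrier G. \<exists>a\<in>R. x = \<phi> g a"
proof -
  obtain F where F: "finite F" "F \<subseteq> S" "\<forall>s\<in>S. \<exists>g\<in>carrier G. \<exists>t\<in>F. s = \<phi> g ` t"
    using cocompact by blast
  have "finite (\<Union>F)" using F finite_simplex by blast
  moreover have "\<Union>F \<subseteq> verts S" using F simplicial_complex_verts[OF simplicial] by blast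
  moreover have "\<exists>g\<in>carrier G. \<exists>a\<in>\<Union>F. x = \<phi> g a" if "x \<in> verts S" for x
  proof -
    from that F(3) obtain g t where "g \<in> carrier G" "t \<in> F" "{x} = \<phi> g ` t"
      unfolding verts_def by blast
    then show ?thesis by (metis UnionI imageE singletonI)
  qed
  ultimately show thesis by (rule that)
qed

lemma finite_conjugator_set:
  assumes h: "h \<in> carrier G" and R: "finite R" "R \<subseteq> verts S"
  obtains \<Gamma> where "finite \<Gamma>" "\<Gamma> \<subseteq> carrier G"
    "\<And>g a. g \<in> carrier G \<Longrightarrow> a \<in> R \<Longrightarrow> cdist S a (\<phi> (inv g \<otimes> h \<otimes> g) a) \<le> n \<Longrightarrow>
      \<exists>\<gamma>\<in>\<Gamma>. inv \<gamma> \<otimes> h \<otimes> \<gamma> = inv g \<otimes> h \<otimes> g"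
proof -
  define P where "P = (\<Union>a\<in>R. {k\<in>carrier G. cdist S a (\<phi> k a) \<le> n})"
  define rep where "rep k = (SOME \<gamma>. \<gamma> \<in> carrier G \<and> inv \<gamma> \<otimes> h \<otimes> \<gamma> = k)" for k
  have rep: "rep (inv g \<otimes> h \<otimes> g) \<in> carrier G \<and>
      inv (rep (inv g \<otimes> h \<otimes> g)) \<otimes> h \<otimes> rep (inv g \<otimes> h \<otimes> g) = inv g \<otimes> h \<otimes> g"
    if "g \<in> carrier G" for g
  proof -
    have "\<exists>\<gamma>. \<gamma> \<in> carrier G \<and> inv \<gamma> \<otimes> h \<otimes> \<gamma> = inv g \<otimes> h \<otimes> g" using that by blast
    then show ?thesis unfolding rep_def by (rule someI_ex)
  qed
  define \<Gamma> where "\<Gamma> = rep ` {inv g \<otimes> h \<otimes> g | g. g \<in> carrier G \<and> inv g \<otimes> h \<otimes> g \<in> P}"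
  have "finite P" unfolding P_def using R finite_bounded_displacement by auto
  then have "finite \<Gamma>" unfolding \<Gamma>_def by (rule finite_imageI[OF finite_subset, rotated]) blast
  moreover have "\<Gamma> \<subseteq> carrier G" unfolding \<Gamma>_def using rep by blast
  moreover have "\<exists>\<gamma>\<in>\<Gamma>. inv \<gamma> \<otimes> h \<otimes> \<gamma> = inv g \<otimes> h \<otimes> g"
    if g: "g \<in> carrier G" and "a \<in> R" "cdist S a (\<phi> (inv g \<otimes> h \<otimes> g) a) \<le> n" for g a
  proof
    have "inv g \<otimes> h \<otimes> g \<in> P" unfolding P_def using that h by auto
    then show "rep (inv g \<otimes> h \<otimes> g) \<in> \<Gamma>" unfolding \<Gamma>_def using g by blast
  qed (use rep[OF g] in blast)
  ultimately show thesis by (rule that)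
qed

lemma displaced_vertices_near_min_set:
  assumes h: "h \<in> carrier G"
  obtains C where "\<And>x. x \<in> verts S \<Longrightarrow> cdist S x (\<phi> h x) \<le> K \<Longrightarrow>
    \<exists>v\<in>verts S. cdist S v (\<phi> h v) = transl_length S (\<phi> h) \<and> cdist S v x \<le> C"
proof -
  have "verts S \<noteq> {}" using connected unfolding connected_complex_def by blast
  then obtain y0 where y0: "y0 \<in> verts S" "cdist S y0 (\<phi> h y0) = transl_length S (\<phi> h)"
    using transl_length_attained[of S "\<phi> h"] by blast
  obtain R where R: "finite R" "R \<subseteq> verts S" "\<And>x. x \<in> verts S \<Longrightarrow> \<exists>g\<in>carrier G. \<exists>a\<in>R. x = \<phi> g a"
    by (rule finite_orbit_representatives) blast
  obtain \<Gamma> where \<Gamma>: "finite \<Gamma>" "\<Gamma> \<subseteq> carrier G"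
    "\<And>g a. g \<in> carrier G \<Longrightarrow> a \<in> R \<Longrightarrow> cdist S a (\<phi> (inv g \<otimes> h \<otimes> g) a) \<le> K \<Longrightarrow>
      \<exists>\<gamma>\<in>\<Gamma>. inv \<gamma> \<otimes> h \<otimes> \<gamma> = inv g \<otimes> h \<otimes> g"
    by (rule finite_conjugator_set[OF h R(1,2)]) blast
  define C where "C = Max ((\<lambda>(\<gamma>, a). cdist S y0 (\<phi> \<gamma> a)) ` (\<Gamma> \<times> R))"
  have "\<exists>v\<in>verts S. cdist S v (\<phi> h v) = transl_length S (\<phi> h) \<and> cdist S v x \<le> C"
    if x: "x \<in> verts S" "cdist S x (\<phi> h x) \<le> K" for x
  proof -
    obtain g a where ga: "g \<in> carrier G" "a \<in> R" "x = \<phi> g a" using R(3)[OF x(1)] by blast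
    have aV: "a \<in> verts S" using ga(2) R(2) by blast
    have "cdist S a (\<phi> (inv g \<otimes> h \<otimes> g) a) \<le> K"
      using displacement_conj[OF ga(1) h aV] ga(3) x(2) by simp
    then obtain \<gamma> where \<gamma>: "\<gamma> \<in> \<Gamma>" "inv \<gamma> \<otimes> h \<otimes> \<gamma> = inv g \<otimes> h \<otimes> g"
      using \<Gamma>(3)[OF ga(1,2)] by blast
    have \<gamma>G: "\<gamma> \<in> carrier G" using \<gamma>(1) \<Gamma>(2) by blast
    define z where "z = g \<otimes> inv \<gamma>"
    have zG: "z \<in> carrier G" unfolding z_def using ga(1) \<gamma>G by simp
    have "cdist S (\<phi> z y0) (\<phi> h (\<phi> z y0)) = cdist S y0 (\<phi> (inv z \<otimes> h \<otimes> z) y0)"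
      using displacement_conj[OF zG h y0(1)] by simp
    also have "\<dots> = transl_length S (\<phi> h)"
      unfolding z_def using conj_eq_imp_centralizes[OF ga(1) \<gamma>G h \<gamma>(2)] y0(2) by simp
    finally have v_min: "cdist S (\<phi> z y0) (\<phi> h (\<phi> z y0)) = transl_length S (\<phi> h)" .
    have "x = \<phi> z (\<phi> \<gamma> a)"
      unfolding z_def using ga \<gamma>G aV by (simp add: composition_rule[symmetric] m_assoc)
    then have "cdist S (\<phi> z y0) x = cdist S y0 (\<phi> \<gamma> a)"
      using cdist_act[OF zG y0(1) act_closed[OF \<gamma>G aV]] by simp
    also have "\<dots> \<le> C"
      unfolding C_def using \<Gamma>(1) R(1) \<gamma>(1) ga(2) by (intro Max_ge) auto
    finally show ?thesis using v_min act_closed[OF zG y0(1)] by blast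
  qed
  then show thesis by (rule that)
qed

end

theorem lemma4p2:
  fixes G :: "('g, 'b) monoid_scheme" and \<phi> :: "'g \<Rightarrow> 'v \<Rightarrow> 'v"
    and S :: "'v set set" and h :: 'g and K :: nat
  assumes "systolic S"
    and "geometric_action G \<phi> S"
    and "h \<in> carrier G"
    and "hyperbolic S (\<phi> h)"
    and "transl_length S (\<phi> h) \<le> K"
  shows "\<exists>C::nat. C > 0 \<and> (\<forall>K'::nat. transl_length S (\<phi> h) \<le> K' \<and> K' \<le> K \<longrightarrow>
           Disp S K (\<phi> h) \<subseteq> nbhd S C (Disp S K' (\<phi> h)))"
proof -
  have simplicial: "simplicial_complex S" and connected: "connected_complex S"
    using assms(1) unfolding systolic_def simply_connected_complex_def by auto
  interpret geometric_complex_action G \<phi> S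
    using simplicial connected assms(2) by unfold_locales
  obtain C where C: "\<And>x. x \<in> verts S \<Longrightarrow> cdist S x (\<phi> h x) \<le> K \<Longrightarrow>
      \<exists>v\<in>verts S. cdist S v (\<phi> h v) = transl_length S (\<phi> h) \<and> cdist S v x \<le> C"
    by (rule displaced_vertices_near_min_set[OF assms(3)]) blast
  have "Disp S K (\<phi> h) \<subseteq> nbhd S (Suc C) (Disp S K' (\<phi> h))"
    if K': "transl_length S (\<phi> h) \<le> K'" for K'
  proof (rule Disp_subset_nbhd[OF simplicial connected])
    fix x assume x: "x \<in> verts S" "cdist S x (\<phi> h x) \<le> K"
    then obtain v where v: "v \<in> verts S" "cdist S v (\<phi> h v) = transl_length S (\<phi> h)"
      "cdist S v x \<le> C"
      using C[OF x] by blast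
    have "cdist S v (\<phi> h v) \<le> K'" using v(2) K' by simp
    with v(1,3) show "\<exists>v\<in>verts S. cdist S v (\<phi> h v) \<le> K' \<and> cdist S v x \<le> C" by blast
  qed
  then show ?thesis by (intro exI[of _ "Suc C"] conjI allI impI) auto
qed

end
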